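(* Let $w_0\in\mathbb{N}$ and $w=(w_1,\dots,w_n)\in\mathbb{N}^n$ with each $w_i\le 2^{n^2}$, let $M=cn$ for a sufficiently large absolute constant $c>0$, let $\lambda=M\|w\|_2$, and define $p_W(x)=\left(\sum_{i=1}^n w_ix_i-w_0\right)^2+\lambda\sum_{i=1}^n x_i(1-x_i)$, $f_W(x)=\mathrm{sign}(\tfrac12-p_W(x))$, and $\beta_n=\frac{1}{2\|w\|_2}\left(\sqrt{M^2+2}-M\right)$. Let $x\in[0,1]^n$ be at $\ell_1$ distance at most $\beta_n$ from some $z\in\{0,1\}^n$. If $w\cdot z=w_0$, then $f_W(x)=1$.
   Context: $\mathrm{sign}(0)=1$; $\|w\|_2$ is the Euclidean norm. *)

theory Defs
  imports Complex_Main
begin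

text \<open>Vectors in R^n / N^n are functions on indices 1..n.\<close>

definition sign :: "real \<Rightarrow> real" where
  "sign t = (if t \<ge> 0 then 1 else -1)"

definition wnorm :: "nat \<Rightarrow> (nat \<Rightarrow> nat) \<Rightarrow> real" where
  "wnorm n w = sqrt (\<Sum>i=1..n. (real (w i))^2)"

definition pW :: "nat \<Rightarrow> real \<Rightarrow> nat \<Rightarrow> (nat \<Rightarrow> nat) \<Rightarrow> (nat \<Rightarrow> real) \<Rightarrow> real" where
  "pW n M w0 w x =
     ((\<Sum>i=1..n. real (w i) * x i) - real w0)^2
     + (M * wnorm n w) * (\<Sum>i=1..n. x i * (1 - x i))"

definition fW :: "nat \<Rightarrow> real \<Rightarrow> nat \<Rightarrow> (nat \<Rightarrow> nat) \<Rightarrow> (nat \<Rightarrow> real) \<Rightarrow> real" where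
  "fW n M w0 w x = sign (1/2 - pW n M w0 w x)"

definition betan :: "nat \<Rightarrow> real \<Rightarrow> (nat \<Rightarrow> nat) \<Rightarrow> real" where
  "betan n M w = 1 / (2 * wnorm n w) * (sqrt (M^2 + 2) - M)"

end

theory Submission
  imports Defs
begin

text \<open>At a Boolean solution \<open>z\<close> of \<open>w \<cdot> z = w\<^sub>0\<close> both terms of \<open>p\<^sub>W\<close> vanish. Moving to \<open>x\<close> at
  \<open>\<ell>\<^sub>1\<close>-distance \<open>\<delta>\<close> changes the linear form by at most \<open>\<parallel>w\<parallel>\<^sub>2 \<delta>\<close>, since every \<open>w\<^sub>i \<le> \<parallel>w\<parallel>\<^sub>2\<close>,
  and each penalty term satisfies \<open>x\<^sub>i (1 - x\<^sub>i) \<le> \<bar>x\<^sub>i - z\<^sub>i\<bar>\<close>. Hence, with \<open>t = \<parallel>w\<parallel>\<^sub>2 \<delta>\<close>,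
  \<open>p\<^sub>W(x) \<le> t\<^sup>2 + M t\<close>, and \<open>\<beta>\<^sub>n \<parallel>w\<parallel>\<^sub>2\<close> is exactly the positive root of \<open>t\<^sup>2 + M t = 1/2\<close>.
  The argument works for every \<open>M \<ge> 0\<close>.\<close>

lemma wnorm_nonneg: "0 \<le> wnorm n w"
  unfolding wnorm_def by (simp add: sum_nonneg)

lemma weight_le_wnorm:
  assumes "i \<in> {1..n}"
  shows "real (w i) \<le> wnorm n w"
proof -
  have "(real (w i))\<^sup>2 \<le> (\<Sum>j=1..n. (real (w j))\<^sup>2)"
    using assms by (intro member_le_sum) auto
  then have "sqrt ((real (w i))\<^sup>2) \<le> wnorm n w"
    unfolding wnorm_def using real_sqrt_le_mono by blast
  then show ?thesis by simp
qed

lemma abs_sum_mult_diff_le: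
  fixes a x y :: "'i \<Rightarrow> real"
  assumes "\<And>i. i \<in> A \<Longrightarrow> \<bar>a i\<bar> \<le> W"
  shows "\<bar>(\<Sum>i\<in>A. a i * x i) - (\<Sum>i\<in>A. a i * y i)\<bar> \<le> W * (\<Sum>i\<in>A. \<bar>x i - y i\<bar>)"
proof -
  have "\<bar>(\<Sum>i\<in>A. a i * x i) - (\<Sum>i\<in>A. a i * y i)\<bar> = \<bar>\<Sum>i\<in>A. a i * (x i - y i)\<bar>"
    by (simp add: sum_subtractf right_diff_distrib)
  also have "\<dots> \<le> (\<Sum>i\<in>A. \<bar>a i\<bar> * \<bar>x i - y i\<bar>)"
    using sum_abs by (metis (no_types, lifting) abs_mult sum.cong)
  also have "\<dots> \<le> (\<Sum>i\<in>A. W * \<bar>x i - y i\<bar>)"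
    using assms by (intro sum_mono mult_right_mono) auto
  finally show ?thesis by (simp add: sum_distrib_left)
qed

lemma penalty_le_dist_bool:
  fixes x :: real
  assumes "0 \<le> x" "x \<le> 1" "z \<in> {0, 1}"
  shows "x * (1 - x) \<le> \<bar>x - z\<bar>"
proof -
  have "x * (1 - x) \<le> x" "x * (1 - x) \<le> 1 - x"
    using assms by (simp_all add: mult_right_le_one_le mult_left_le_one_le)
  with assms show ?thesis by auto
qed

lemma quadratic_le_half_below_root:
  fixes M t :: real
  assumes "0 \<le> M" "0 \<le> t" "t \<le> (sqrt (M\<^sup>2 + 2) - M) / 2"
  shows "t\<^sup>2 + M * t \<le> 1 / 2"
proof -
  define s where "s = (sqrt (M\<^sup>2 + 2) - M) / 2"
  have "t\<^sup>2 + M * t \<le> s\<^sup>2 + M * s"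
    using assms unfolding s_def by (intro add_mono power_mono mult_left_mono) auto
  also have "\<dots> = ((sqrt (M\<^sup>2 + 2))\<^sup>2 - M\<^sup>2) / 4"
    unfolding s_def by (simp add: power2_eq_square field_simps)
  finally show ?thesis by simp
qed

lemma pW_le_half_near_solution:
  fixes M :: real
  assumes "0 \<le> M"
    and x: "\<forall>i\<in>{1..n}. 0 \<le> x i \<and> x i \<le> 1"
    and z: "\<forall>i\<in>{1..n}. z i \<in> {0::nat, 1}"
    and dist: "(\<Sum>i=1..n. \<bar>x i - real (z i)\<bar>) \<le> betan n M w"
    and solution: "(\<Sum>i=1..n. w i * z i) = w0"
  shows "pW n M w0 w x \<le> 1 / 2"
proof -
  define W where "W = wnorm n w"
  define \<delta> where "\<delta> = (\<Sum>i=1..n. \<bar>x i - real (z i)\<bar>)"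
  have "0 \<le> W" "0 \<le> \<delta>"
    unfolding W_def \<delta>_def by (simp_all add: wnorm_nonneg sum_nonneg)
  have "real w0 = (\<Sum>i=1..n. real (w i) * real (z i))"
    unfolding solution[symmetric] by simp
  moreover have "\<bar>(\<Sum>i=1..n. real (w i) * x i) - (\<Sum>i=1..n. real (w i) * real (z i))\<bar> \<le> W * \<delta>"
    unfolding W_def \<delta>_def by (rule abs_sum_mult_diff_le) (simp add: weight_le_wnorm)
  ultimately have "\<bar>(\<Sum>i=1..n. real (w i) * x i) - real w0\<bar> \<le> W * \<delta>"
    by simp
  then have square: "((\<Sum>i=1..n. real (w i) * x i) - real w0)\<^sup>2 \<le> (W * \<delta>)\<^sup>2"
    by (metis abs_ge_zero power2_abs power_mono)
  have "(\<Sum>i=1..n. x i * (1 - x i)) \<le> \<delta>"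
    unfolding \<delta>_def using x z by (intro sum_mono penalty_le_dist_bool) auto
  then have "M * W * (\<Sum>i=1..n. x i * (1 - x i)) \<le> M * W * \<delta>"
    using \<open>0 \<le> M\<close> \<open>0 \<le> W\<close> by (intro mult_left_mono) auto
  with square have bound: "pW n M w0 w x \<le> (W * \<delta>)\<^sup>2 + M * (W * \<delta>)"
    unfolding pW_def W_def[symmetric] mult.assoc by linarith
  show ?thesis
  proof (cases "W = 0")
    case True
    with bound show ?thesis by simp
  next
    case False
    with dist \<open>0 \<le> W\<close> have "W * \<delta> \<le> (sqrt (M\<^sup>2 + 2) - M) / 2"
      unfolding \<delta>_def betan_def W_def[symmetric] by (simp add: field_simps)
    with \<open>0 \<le> M\<close> \<open>0 \<le> W\<close> \<open>0 \<le> \<delta>\<close> bound show ?thesis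
      using quadratic_le_half_below_root[of M "W * \<delta>"] by simp
  qed
qed

theorem claim5p10:
  shows "\<exists>c0>0. \<forall>c\<ge>c0. \<forall>(n::nat) (w0::nat) (w::nat \<Rightarrow> nat) (x::nat \<Rightarrow> real) (z::nat \<Rightarrow> nat).
    (\<forall>i\<in>{1..n}. w i \<le> 2^(n^2)) \<longrightarrow>
    (\<forall>i\<in>{1..n}. 0 \<le> x i \<and> x i \<le> 1) \<longrightarrow>
    (\<forall>i\<in>{1..n}. z i \<in> {0,1}) \<longrightarrow>
    (\<Sum>i=1..n. \<bar>x i - real (z i)\<bar>) \<le> betan n (c * real n) w \<longrightarrow>
    (\<Sum>i=1..n. w i * z i) = w0 \<longrightarrow>
    fW n (c * real n) w0 w x = 1"
proof (intro exI[of _ 1] conjI allI impI)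
  fix c :: real and n w0 w x z
  assume "1 \<le> c"
    and "\<forall>i\<in>{1..n}. 0 \<le> x i \<and> x i \<le> 1"
    and "\<forall>i\<in>{1..n}. z i \<in> {0::nat, 1}"
    and "(\<Sum>i=1..n. \<bar>x i - real (z i)\<bar>) \<le> betan n (c * real n) w"
    and "(\<Sum>i=1..n. w i * z i) = w0"
  then have "pW n (c * real n) w0 w x \<le> 1 / 2"
    by (intro pW_le_half_near_solution) auto
  then show "fW n (c * real n) w0 w x = 1"
    unfolding fW_def sign_def by simp
qed simp

end
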